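(* Let $W_\Gamma$ be a graph product on a finite graph $\Gamma=(V,E)$ with every vertex group primary or infinite cyclic. Let $M,N$ be two $\sim_\tau$-equivalence classes such that $W_{\Gamma_N}$ is not a free group of rank $k\ge 2$. If $N\cap L_M\ne\emptyset$, then $N\subset L_M$.
   Context: Graph: $\Gamma=(V,E)$, $V$ non-empty finite, $E$ a set of 2-element subsets; $lk(v)=\{x:\{v,x\}\in E\}$, $st(v)=lk(v)\cup\{v\}$; $W_{\Gamma_N}$ is the subgroup generated by the vertex groups $G_v$, $v\in N$. A group is primary if cyclic of order $p^k$, $p$ prime, $k\ge1$. Relation $\le_\tau$ on $V$: $v\le_\tau v$; for $v\neq w$, $v\le_\tau w$ iff either (a) $|G_v|=\infty$ and $lk(v)\subset st(w)$, or (b) $|G_v|=p^k$, $|G_w|=p^\ell$ for the same prime $p$ and $st(v)\subset st(w)$; $v\sim_\tau w$ iff $v\le_\tau w$ and $w\le_\tau v$. For $M\subset V$, $L_M=V\setminus\bigcup_{w\in M}st(w)$. *)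

theory Defs
  imports "HOL-Algebra.Algebra"
begin

definition simple_graph :: "'v set \<Rightarrow> 'v set set \<Rightarrow> bool" where
  "simple_graph V E \<longleftrightarrow> finite V \<and> V \<noteq> {} \<and>
     (\<forall>e\<in>E. e \<subseteq> V \<and> card e = 2)"

definition lk :: "'v set set \<Rightarrow> 'v \<Rightarrow> 'v set" where
  "lk E v = {x. {v, x} \<in> E}"

definition st :: "'v set set \<Rightarrow> 'v \<Rightarrow> 'v set" where
  "st E v = lk E v \<union> {v}"

section \<open>Vertex groups (cyclic, described by their order; 0 = infinite)\<close>

definition primary_order :: "nat \<Rightarrow> bool" where
  "primary_order n \<longleftrightarrow> (\<exists>p k. Factorial_Ring.prime p \<and> k \<ge> 1 \<and> n = p ^ k)"

text \<open>Words are lists of pairs (v, a), standing for the a-th power of the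
  generator of the cyclic vertex group G_v (order ord v, or infinite if ord v = 0).\<close>

inductive gp_step :: "('v \<Rightarrow> nat) \<Rightarrow> 'v set set \<Rightarrow> ('v \<times> int) list \<Rightarrow> ('v \<times> int) list \<Rightarrow> bool"
  for ord :: "'v \<Rightarrow> nat" and E :: "'v set set" where
  merge: "gp_step ord E [(v, a), (v, b)] [(v, a + b)]"
| zero: "gp_step ord E [(v, 0)] []"
| order: "gp_step ord E [(v, int (ord v))] []"
| comm: "{v, w} \<in> E \<Longrightarrow> gp_step ord E [(v, a), (w, b)] [(w, b), (v, a)]"

definition gp_words :: "'v set \<Rightarrow> ('v \<times> int) list set" where
  "gp_words V = {xs. set (map fst xs) \<subseteq> V}"

definition gp_onestep :: "'v set \<Rightarrow> ('v \<Rightarrow> nat) \<Rightarrow> 'v set set \<Rightarrow> (('v \<times> int) list \<times> ('v \<times> int) list) set" where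
  "gp_onestep V ord E =
     {(xs @ l @ ys, xs @ r @ ys) | xs l r ys. gp_step ord E l r \<and>
        xs @ l @ ys \<in> gp_words V \<and> xs @ r @ ys \<in> gp_words V}"

definition gp_rel :: "'v set \<Rightarrow> ('v \<Rightarrow> nat) \<Rightarrow> 'v set set \<Rightarrow> (('v \<times> int) list \<times> ('v \<times> int) list) set" where
  "gp_rel V ord E = (gp_onestep V ord E \<union> (gp_onestep V ord E)\<inverse>)\<^sup>*"

definition graph_product :: "'v set \<Rightarrow> ('v \<Rightarrow> nat) \<Rightarrow> 'v set set \<Rightarrow> ('v \<times> int) list set monoid" where
  "graph_product V ord E =
     \<lparr>carrier = gp_words V // gp_rel V ord E,
      monoid.mult = (\<lambda>A B. gp_rel V ord E `` {(SOME x. x \<in> A) @ (SOME y. y \<in> B)}),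
      one = gp_rel V ord E `` {[]}\<rparr>"

definition vertex_elem :: "'v set \<Rightarrow> ('v \<Rightarrow> nat) \<Rightarrow> 'v set set \<Rightarrow> 'v \<Rightarrow> int \<Rightarrow> ('v \<times> int) list set" where
  "vertex_elem V ord E v a = gp_rel V ord E `` {[(v, a)]}"

definition W_sub :: "'v set \<Rightarrow> ('v \<Rightarrow> nat) \<Rightarrow> 'v set set \<Rightarrow> 'v set \<Rightarrow> ('v \<times> int) list set set" where
  "W_sub V ord E N = generate (graph_product V ord E) {vertex_elem V ord E v a | v a. v \<in> N}"

definition word_prod :: "('a, 'b) monoid_scheme \<Rightarrow> ('a \<times> bool) list \<Rightarrow> 'a" where
  "word_prod G ws = foldr (\<lambda>(b, e) acc. (if e then b else inv\<^bsub>G\<^esub> b) \<otimes>\<^bsub>G\<^esub> acc) ws \<one>\<^bsub>G\<^esub>"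

definition freely_reduced :: "('a \<times> bool) list \<Rightarrow> bool" where
  "freely_reduced ws \<longleftrightarrow>
     (\<forall>i. Suc i < length ws \<longrightarrow> \<not> (fst (ws ! i) = fst (ws ! Suc i) \<and> snd (ws ! i) \<noteq> snd (ws ! Suc i)))"

definition free_basis :: "('a, 'b) monoid_scheme \<Rightarrow> 'a set \<Rightarrow> 'a set \<Rightarrow> bool" where
  "free_basis G H B \<longleftrightarrow> B \<subseteq> H \<and> generate G B = H \<and>
     (\<forall>ws. ws \<noteq> [] \<and> set (map fst ws) \<subseteq> B \<and> freely_reduced ws \<longrightarrow> word_prod G ws \<noteq> \<one>\<^bsub>G\<^esub>)"

definition free_of_rank_ge2 :: "('a, 'b) monoid_scheme \<Rightarrow> 'a set \<Rightarrow> bool" where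
  "free_of_rank_ge2 G H \<longleftrightarrow> (\<exists>B. free_basis G H B \<and> (infinite B \<or> card B \<ge> 2))"

definition tau_le :: "('v \<Rightarrow> nat) \<Rightarrow> 'v set set \<Rightarrow> 'v \<Rightarrow> 'v \<Rightarrow> bool" where
  "tau_le ord E v w \<longleftrightarrow> v = w \<or>
     (v \<noteq> w \<and>
       ((ord v = 0 \<and> lk E v \<subseteq> st E w) \<or>
        (\<exists>p k l. Factorial_Ring.prime p \<and> k \<ge> 1 \<and> l \<ge> 1 \<and> ord v = p ^ k \<and> ord w = p ^ l \<and> st E v \<subseteq> st E w)))"

definition tau_equiv :: "('v \<Rightarrow> nat) \<Rightarrow> 'v set set \<Rightarrow> 'v \<Rightarrow> 'v \<Rightarrow> bool" where
  "tau_equiv ord E v w \<longleftrightarrow> tau_le ord E v w \<and> tau_le ord E w v"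

definition tau_class :: "'v set \<Rightarrow> ('v \<Rightarrow> nat) \<Rightarrow> 'v set set \<Rightarrow> 'v set \<Rightarrow> bool" where
  "tau_class V ord E M \<longleftrightarrow> (\<exists>v\<in>V. M = {w\<in>V. tau_equiv ord E v w})"

definition L_set :: "'v set \<Rightarrow> 'v set set \<Rightarrow> 'v set \<Rightarrow> 'v set" where
  "L_set V E M = V - (\<Union>w\<in>M. st E w)"

end

theory Submission
  imports Defs
begin

text \<open>If all vertices of the class N have the same star, then one vertex of N misses the
  stars of M exactly when every vertex of N does, because star membership is symmetric.
  Otherwise two vertices of N have different stars, which for tau-equivalent vertices forces
  both to be of infinite order, non-adjacent, with equal links; then every vertex of N is such
  a twin, so N is an independent set of at least two vertices with infinite cyclic vertex
  groups, and the subgroup they generate is free on the generators of these groups. Freeness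
  is detected by the retraction of the graph product onto the free product of the G_v, v in N,
  computed on words by deleting the other letters and reducing syllables.\<close>

subsection \<open>The graph product as a group\<close>

lemma gp_words_append [simp]: "xs @ ys \<in> gp_words V \<longleftrightarrow> xs \<in> gp_words V \<and> ys \<in> gp_words V"
  by (auto simp: gp_words_def)

lemma gp_words_Cons [simp]: "x # ys \<in> gp_words V \<longleftrightarrow> fst x \<in> V \<and> ys \<in> gp_words V"
  by (auto simp: gp_words_def)

lemma gp_words_Nil [simp]: "[] \<in> gp_words V"
  by (auto simp: gp_words_def)

lemma gp_rel_gp_words: "(xs, ys) \<in> gp_rel V ord E \<Longrightarrow> xs \<in> gp_words V \<Longrightarrow> ys \<in> gp_words V"
  unfolding gp_rel_def by (induction rule: rtrancl_induct) (auto simp: gp_onestep_def)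

lemma gp_rel_refl [simp]: "(xs, xs) \<in> gp_rel V ord E"
  unfolding gp_rel_def by simp

lemma gp_rel_sym: "(xs, ys) \<in> gp_rel V ord E \<Longrightarrow> (ys, xs) \<in> gp_rel V ord E"
  unfolding gp_rel_def by (metis converse_Un converse_converse rtrancl_converseI sup_commute)

lemma gp_rel_trans: "(xs, ys) \<in> gp_rel V ord E \<Longrightarrow> (ys, zs) \<in> gp_rel V ord E \<Longrightarrow> (xs, zs) \<in> gp_rel V ord E"
  unfolding gp_rel_def by (rule rtrancl_trans)

lemma gp_rel_Image_eq_iff:
  "xs \<in> gp_words V \<Longrightarrow> gp_rel V ord E `` {xs} = gp_rel V ord E `` {ys} \<longleftrightarrow> (xs, ys) \<in> gp_rel V ord E"
  by (auto intro: gp_rel_trans gp_rel_sym)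

lemma gp_rel_stepI:
  "gp_step ord E l r \<Longrightarrow> xs @ l @ ys \<in> gp_words V \<Longrightarrow> xs @ r @ ys \<in> gp_words V
    \<Longrightarrow> (xs @ l @ ys, xs @ r @ ys) \<in> gp_rel V ord E"
  unfolding gp_rel_def gp_onestep_def by blast

lemma gp_onestep_context:
  assumes "(xs, ys) \<in> gp_onestep V ord E" "us \<in> gp_words V" "ws \<in> gp_words V"
  shows "(us @ xs @ ws, us @ ys @ ws) \<in> gp_onestep V ord E"
proof -
  from assms(1) obtain as l r bs where xs: "xs = as @ l @ bs" and ys: "ys = as @ r @ bs"
    and "gp_step ord E l r" "as @ l @ bs \<in> gp_words V" "as @ r @ bs \<in> gp_words V"
    unfolding gp_onestep_def by blast
  moreover have "(us @ as) @ l @ (bs @ ws) \<in> gp_words V" "(us @ as) @ r @ (bs @ ws) \<in> gp_words V"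
    using calculation assms(2,3) by auto
  ultimately show ?thesis
    unfolding gp_onestep_def xs ys
    by (intro CollectI exI[of _ "us @ as"] exI[of _ l] exI[of _ r] exI[of _ "bs @ ws"]) simp
qed

lemma gp_rel_context:
  "(xs, ys) \<in> gp_rel V ord E \<Longrightarrow> us \<in> gp_words V \<Longrightarrow> ws \<in> gp_words V
    \<Longrightarrow> (us @ xs @ ws, us @ ys @ ws) \<in> gp_rel V ord E"
  unfolding gp_rel_def
proof (induction rule: rtrancl_induct)
  case (step ys zs)
  then have "(us @ ys @ ws, us @ zs @ ws) \<in> gp_onestep V ord E \<union> (gp_onestep V ord E)\<inverse>"
    using gp_onestep_context by blast
  with step.IH step.prems show ?case by (meson rtrancl.rtrancl_into_rtrancl)
qed simp

lemma gp_rel_append: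
  assumes "(xs, xs') \<in> gp_rel V ord E" "(ys, ys') \<in> gp_rel V ord E" "xs \<in> gp_words V" "ys \<in> gp_words V"
  shows "(xs @ ys, xs' @ ys') \<in> gp_rel V ord E"
proof -
  have "xs' \<in> gp_words V" using assms gp_rel_gp_words by blast
  have "(xs @ ys, xs' @ ys) \<in> gp_rel V ord E"
    using gp_rel_context[OF assms(1) gp_words_Nil assms(4)] by simp
  moreover have "(xs' @ ys, xs' @ ys') \<in> gp_rel V ord E"
    using gp_rel_context[OF assms(2) \<open>xs' \<in> gp_words V\<close> gp_words_Nil] by simp
  ultimately show ?thesis by (rule gp_rel_trans)
qed

lemma carrier_graph_product:
  "A \<in> carrier (graph_product V ord E) \<longleftrightarrow> (\<exists>xs\<in>gp_words V. A = gp_rel V ord E `` {xs})"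
  unfolding graph_product_def quotient_def by auto

lemma one_graph_product: "\<one>\<^bsub>graph_product V ord E\<^esub> = gp_rel V ord E `` {[]}"
  by (simp add: graph_product_def)

lemma mult_graph_product:
  assumes "xs \<in> gp_words V" "ys \<in> gp_words V"
  shows "gp_rel V ord E `` {xs} \<otimes>\<^bsub>graph_product V ord E\<^esub> gp_rel V ord E `` {ys} = gp_rel V ord E `` {xs @ ys}"
proof -
  let ?R = "gp_rel V ord E"
  have "(SOME x. x \<in> ?R``{xs}) \<in> ?R``{xs}" by (rule someI[of _ xs]) simp
  moreover have "(SOME y. y \<in> ?R``{ys}) \<in> ?R``{ys}" by (rule someI[of _ ys]) simp
  ultimately have "(xs @ ys, (SOME x. x \<in> ?R``{xs}) @ (SOME y. y \<in> ?R``{ys})) \<in> ?R"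
    using assms by (simp add: gp_rel_append)
  then have "?R `` {(SOME x. x \<in> ?R``{xs}) @ (SOME y. y \<in> ?R``{ys})} = ?R `` {xs @ ys}"
    using assms gp_rel_Image_eq_iff[of "xs @ ys" V ord E] by (metis gp_words_append)
  then show ?thesis by (simp add: graph_product_def)
qed

definition inverse_word :: "('v \<times> int) list \<Rightarrow> ('v \<times> int) list" where
  "inverse_word xs = rev (map (\<lambda>(v, a). (v, - a)) xs)"

lemma inverse_word_gp_words: "xs \<in> gp_words V \<Longrightarrow> inverse_word xs \<in> gp_words V"
  by (auto simp: inverse_word_def gp_words_def)

lemma gp_rel_cancel_letter:
  assumes "v \<in> V" "us \<in> gp_words V" "ws \<in> gp_words V"
  shows "(us @ [(v, - a), (v, a)] @ ws, us @ ws) \<in> gp_rel V ord E"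
proof -
  have "(us @ [(v, - a), (v, a)] @ ws, us @ [(v, 0)] @ ws) \<in> gp_rel V ord E"
    using gp_rel_stepI[OF gp_step.merge, of us v "- a" a ws] assms by simp
  moreover have "(us @ [(v, 0)] @ ws, us @ [] @ ws) \<in> gp_rel V ord E"
    by (rule gp_rel_stepI[OF gp_step.zero]) (use assms in auto)
  ultimately show ?thesis using gp_rel_trans by fastforce
qed

lemma gp_rel_cancel_inverse_word:
  "xs \<in> gp_words V \<Longrightarrow> us \<in> gp_words V \<Longrightarrow> ws \<in> gp_words V
    \<Longrightarrow> (us @ inverse_word xs @ xs @ ws, us @ ws) \<in> gp_rel V ord E"
proof (induction xs arbitrary: ws)
  case (Cons x xs)
  obtain v a where x: "x = (v, a)" by (cases x)
  have "us @ inverse_word (x # xs) @ (x # xs) @ ws = (us @ inverse_word xs) @ [(v, - a), (v, a)] @ (xs @ ws)"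
    by (simp add: inverse_word_def x)
  also have "(\<dots>, (us @ inverse_word xs) @ (xs @ ws)) \<in> gp_rel V ord E"
    using Cons.prems x by (intro gp_rel_cancel_letter) (auto intro: inverse_word_gp_words)
  finally show ?case using Cons gp_rel_trans by fastforce
qed (simp add: inverse_word_def)

lemma group_graph_product: "group (graph_product V ord E)"
proof (rule groupI)
  let ?G = "graph_product V ord E" and ?R = "gp_rel V ord E"
  fix x y z assume "x \<in> carrier ?G" "y \<in> carrier ?G" "z \<in> carrier ?G"
  then obtain xs ys zs where "xs \<in> gp_words V" "ys \<in> gp_words V" "zs \<in> gp_words V"
    and "x = ?R `` {xs}" "y = ?R `` {ys}" "z = ?R `` {zs}"
    by (auto simp: carrier_graph_product)
  then show "x \<otimes>\<^bsub>?G\<^esub> y \<in> carrier ?G" "x \<otimes>\<^bsub>?G\<^esub> y \<otimes>\<^bsub>?G\<^esub> z = x \<otimes>\<^bsub>?G\<^esub> (y \<otimes>\<^bsub>?G\<^esub> z)"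
    by (auto simp: mult_graph_product carrier_graph_product)
next
  let ?G = "graph_product V ord E" and ?R = "gp_rel V ord E"
  show "\<one>\<^bsub>?G\<^esub> \<in> carrier ?G" by (auto simp: one_graph_product carrier_graph_product)
  fix x assume "x \<in> carrier ?G"
  then obtain xs where xs: "xs \<in> gp_words V" "x = ?R `` {xs}" by (auto simp: carrier_graph_product)
  then show "\<one>\<^bsub>?G\<^esub> \<otimes>\<^bsub>?G\<^esub> x = x" by (simp add: one_graph_product mult_graph_product)
  have iw: "inverse_word xs \<in> gp_words V" using xs(1) by (rule inverse_word_gp_words)
  have "?R `` {inverse_word xs} \<otimes>\<^bsub>?G\<^esub> x = ?R `` {inverse_word xs @ xs}"
    using xs iw by (simp add: mult_graph_product)
  also have "\<dots> = \<one>\<^bsub>?G\<^esub>"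
    using xs iw gp_rel_cancel_inverse_word[of xs V "[]" "[]" ord E]
    by (simp add: one_graph_product gp_rel_Image_eq_iff)
  finally show "\<exists>y\<in>carrier ?G. y \<otimes>\<^bsub>?G\<^esub> x = \<one>\<^bsub>?G\<^esub>"
    using iw by (intro bexI[of _ "?R `` {inverse_word xs}"]) (auto simp: carrier_graph_product)
qed

lemma vertex_elem_carrier: "v \<in> V \<Longrightarrow> vertex_elem V ord E v a \<in> carrier (graph_product V ord E)"
  unfolding vertex_elem_def carrier_graph_product by (intro bexI[of _ "[(v, a)]"]) auto

lemma vertex_elem_mult:
  assumes "v \<in> V"
  shows "vertex_elem V ord E v a \<otimes>\<^bsub>graph_product V ord E\<^esub> vertex_elem V ord E v b = vertex_elem V ord E v (a + b)"
proof -
  have "([] @ [(v, a), (v, b)] @ [], [] @ [(v, a + b)] @ []) \<in> gp_rel V ord E"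
    by (rule gp_rel_stepI[OF gp_step.merge]) (use assms in auto)
  then show ?thesis
    unfolding vertex_elem_def using assms by (simp add: mult_graph_product gp_rel_Image_eq_iff)
qed

lemma vertex_elem_zero:
  assumes "v \<in> V"
  shows "vertex_elem V ord E v 0 = \<one>\<^bsub>graph_product V ord E\<^esub>"
proof -
  have "([] @ [(v, 0)] @ [], [] @ [] @ []) \<in> gp_rel V ord E"
    by (rule gp_rel_stepI[OF gp_step.zero]) (use assms in auto)
  then show ?thesis
    unfolding vertex_elem_def one_graph_product using assms by (simp add: gp_rel_Image_eq_iff)
qed

lemma vertex_elem_inv:
  assumes "v \<in> V"
  shows "inv\<^bsub>graph_product V ord E\<^esub> (vertex_elem V ord E v a) = vertex_elem V ord E v (- a)"
proof -
  interpret group "graph_product V ord E" by (rule group_graph_product)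
  show ?thesis
    by (rule inv_equality) (use assms in \<open>simp_all add: vertex_elem_mult vertex_elem_zero vertex_elem_carrier\<close>)
qed

lemma generate_vertex_generators:
  assumes "N \<subseteq> V"
  shows "generate (graph_product V ord E) {vertex_elem V ord E v 1 | v. v \<in> N} = W_sub V ord E N"
proof
  let ?G = "graph_product V ord E" and ?B = "{vertex_elem V ord E v 1 | v. v \<in> N}"
  interpret group ?G by (rule group_graph_product)
  have B: "?B \<subseteq> carrier ?G" using assms by (auto intro: vertex_elem_carrier)
  have powers: "vertex_elem V ord E v (int k) \<in> generate ?G ?B" if "v \<in> N" for v k
  proof (induction k)
    case 0
    show ?case using that assms by (simp add: subsetD vertex_elem_zero generate.one)
  next
    case (Suc k)
    have "vertex_elem V ord E v 1 \<in> generate ?G ?B" by (rule generate.incl) (use that in blast)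
    then have "vertex_elem V ord E v 1 \<otimes>\<^bsub>?G\<^esub> vertex_elem V ord E v (int k) \<in> generate ?G ?B"
      using Suc by (rule generate.eng)
    then show ?case using that assms by (simp add: subsetD vertex_elem_mult)
  qed
  have "vertex_elem V ord E v a \<in> generate ?G ?B" if "v \<in> N" for v a
  proof (cases "a \<ge> 0")
    case True then show ?thesis using powers[OF that, of "nat a"] by simp
  next
    case False
    have "inv\<^bsub>?G\<^esub> vertex_elem V ord E v (int (nat (- a))) \<in> generate ?G ?B"
      using subgroup.m_inv_closed[OF generate_is_subgroup[OF B] powers[OF that]] .
    then show ?thesis using that assms False by (simp add: subsetD vertex_elem_inv)
  qed
  then show "W_sub V ord E N \<subseteq> generate ?G ?B"
    unfolding W_sub_def by (intro generate_subgroup_incl[OF _ generate_is_subgroup[OF B]]) blast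
  show "generate ?G ?B \<subseteq> W_sub V ord E N"
    unfolding W_sub_def by (rule mono_generate) blast
qed

definition signed_letter :: "('a \<Rightarrow> 'v) \<Rightarrow> 'a \<times> bool \<Rightarrow> 'v \<times> int" where
  "signed_letter f = (\<lambda>(b, e). (f b, if e then 1 else - 1))"

lemma word_prod_vertex_generators:
  assumes "\<forall>b\<in>set (map fst ws). f b \<in> V \<and> b = vertex_elem V ord E (f b) 1"
  shows "map (signed_letter f) ws \<in> gp_words V"
    and "word_prod (graph_product V ord E) ws = gp_rel V ord E `` {map (signed_letter f) ws}"
proof -
  show words: "map (signed_letter f) ws \<in> gp_words V"
    using assms by (auto simp: gp_words_def signed_letter_def)
  show "word_prod (graph_product V ord E) ws = gp_rel V ord E `` {map (signed_letter f) ws}"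
    using assms words
  proof (induction ws)
    case (Cons x ws)
    obtain b e where x: "x = (b, e)" by (cases x)
    have fb: "f b \<in> V" "b = vertex_elem V ord E (f b) 1" using Cons.prems(1) x by auto
    have "(if e then b else inv\<^bsub>graph_product V ord E\<^esub> b) = gp_rel V ord E `` {[signed_letter f x]}"
      using fb vertex_elem_inv[of "f b" V ord E 1]
      unfolding x by (cases e) (simp_all add: vertex_elem_def signed_letter_def)
    then have "word_prod (graph_product V ord E) (x # ws)
        = gp_rel V ord E `` {[signed_letter f x]} \<otimes>\<^bsub>graph_product V ord E\<^esub> gp_rel V ord E `` {map (signed_letter f) ws}"
      using Cons by (simp add: word_prod_def x)
    also have "\<dots> = gp_rel V ord E `` {map (signed_letter f) (x # ws)}"
      using Cons.prems(2) by (simp add: mult_graph_product)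
    finally show ?case .
  qed (simp add: word_prod_def one_graph_product)
qed

subsection \<open>Syllable normal form in a free product of infinite cyclic groups\<close>

fun cons_syllable :: "'v \<times> int \<Rightarrow> ('v \<times> int) list \<Rightarrow> ('v \<times> int) list" where
  "cons_syllable (v, a) [] = (if a = 0 then [] else [(v, a)])"
| "cons_syllable (v, a) ((w, b) # L) =
    (if a = 0 then (w, b) # L
     else if w = v then (if a + b = 0 then L else (v, a + b) # L)
     else (v, a) # (w, b) # L)"

fun syllable_reduced :: "('v \<times> int) list \<Rightarrow> bool" where
  "syllable_reduced [] = True"
| "syllable_reduced [(v, a)] = (a \<noteq> 0)"
| "syllable_reduced ((v, a) # (w, b) # L) = (a \<noteq> 0 \<and> v \<noteq> w \<and> syllable_reduced ((w, b) # L))"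

lemma syllable_reduced_Cons:
  "syllable_reduced ((v, a) # L) \<longleftrightarrow> a \<noteq> 0 \<and> syllable_reduced L \<and> (L = [] \<or> fst (hd L) \<noteq> v)"
  by (cases L) auto

lemma syllable_reduced_cons_syllable:
  assumes "syllable_reduced L"
  shows "syllable_reduced (cons_syllable x L)"
proof (cases x)
  case (Pair v a)
  show ?thesis
  proof (cases L)
    case (Cons y L')
    then show ?thesis using Pair assms by (cases y) (auto simp: syllable_reduced_Cons)
  qed (simp add: Pair)
qed

lemma cons_syllable_zero [simp]: "cons_syllable (v, 0) L = L"
  by (cases L) auto

lemma cons_syllable_cons_syllable:
  assumes "syllable_reduced L"
  shows "cons_syllable (v, a) (cons_syllable (v, b) L) = cons_syllable (v, a + b) L"
proof (cases "a = 0 \<or> b = 0")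
  case False
  show ?thesis
  proof (cases L)
    case (Cons y L')
    obtain w c where y: "y = (w, c)" by (cases y)
    have c: "c \<noteq> 0" and L': "L' = [] \<or> fst (hd L') \<noteq> w"
      using assms unfolding Cons y syllable_reduced_Cons by auto
    have "cons_syllable (v, a) L' = (v, a) # L'" if "w = v"
      using L' False that by (cases L') auto
    then show ?thesis using False c unfolding Cons y by (auto simp: add.assoc)
  qed (use False in auto)
qed auto

text \<open>The normal form of the image of a word under the retraction of W_\<Gamma> onto the free
  product of the G_v, v \<in> N, that kills all other vertex groups. It is invariant under the
  defining relations only when N is an independent set of infinite-order vertices.\<close>

definition syllable_form :: "'v set \<Rightarrow> ('v \<times> int) list \<Rightarrow> ('v \<times> int) list" where
  "syllable_form N xs = foldr cons_syllable (filter (\<lambda>x. fst x \<in> N) xs) []"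

lemma syllable_reduced_foldr: "syllable_reduced L \<Longrightarrow> syllable_reduced (foldr cons_syllable xs L)"
  by (induction xs) (auto intro: syllable_reduced_cons_syllable)

lemma syllable_reduced_syllable_form: "syllable_reduced (syllable_form N xs)"
  unfolding syllable_form_def by (rule syllable_reduced_foldr) simp

lemma syllable_form_append:
  "syllable_form N (xs @ ys) = foldr cons_syllable (filter (\<lambda>x. fst x \<in> N) xs) (syllable_form N ys)"
  by (simp add: syllable_form_def)

lemma syllable_form_Cons: "v \<in> N \<Longrightarrow> syllable_form N ((v, a) # xs) = cons_syllable (v, a) (syllable_form N xs)"
  by (simp add: syllable_form_def)

lemma gp_rel_syllable_form:
  assumes "(xs, ys) \<in> gp_rel V ord E" "\<forall>v\<in>N. ord v = 0" "\<forall>v\<in>N. \<forall>w\<in>N. {v, w} \<notin> E"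
  shows "syllable_form N xs = syllable_form N ys"
proof -
  have step: "foldr cons_syllable (filter (\<lambda>x. fst x \<in> N) l) L = foldr cons_syllable (filter (\<lambda>x. fst x \<in> N) r) L"
    if "gp_step ord E l r" "syllable_reduced L" for l r L
    using that(1) assms(2,3) that(2) by cases (auto simp: cons_syllable_cons_syllable)
  have "syllable_form N xs = syllable_form N ys" if "(xs, ys) \<in> gp_onestep V ord E" for xs ys
    using that step[OF _ syllable_reduced_syllable_form]
    unfolding gp_onestep_def by (auto simp: syllable_form_append)
  with assms(1) show ?thesis
    unfolding gp_rel_def by (induction rule: rtrancl_induct) auto
qed

lemma freely_reduced_ConsD: "freely_reduced (x # ws) \<Longrightarrow> freely_reduced ws"
  unfolding freely_reduced_def by (metis Suc_less_eq length_Cons nth_Cons_Suc)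

lemma freely_reduced_Cons_ConsD: "freely_reduced (x # y # ws) \<Longrightarrow> \<not> (fst x = fst y \<and> snd x \<noteq> snd y)"
  unfolding freely_reduced_def by (drule spec[of _ 0]) simp

text \<open>The sign condition on the leading syllable is what the induction needs: the next
  letter can then never cancel it.\<close>

lemma syllable_form_freely_reduced:
  assumes "inj_on f B" "f ` B \<subseteq> N" "ws \<noteq> []" "set (map fst ws) \<subseteq> B" "freely_reduced ws"
  shows "\<exists>c L. syllable_form N (map (signed_letter f) ws) = (f (fst (hd ws)), c) # L
    \<and> (if snd (hd ws) then c > 0 else c < 0)"
  using assms(3-)
proof (induction ws)
  case (Cons x ws)
  have fx: "f (fst x) \<in> N" using Cons.prems assms(2) by auto
  have head: "syllable_form N (map (signed_letter f) (x # ws))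
      = cons_syllable (f (fst x), if snd x then 1 else - 1) (syllable_form N (map (signed_letter f) ws))"
    using fx by (cases x) (simp add: signed_letter_def syllable_form_Cons)
  show ?case
  proof (cases ws)
    case Nil then show ?thesis unfolding head by (simp add: syllable_form_def)
  next
    case (Cons y ws')
    have "set (map fst ws) \<subseteq> B" using Cons.prems(2) by simp
    moreover have "freely_reduced ws" using Cons.prems(3) by (rule freely_reduced_ConsD)
    ultimately
    obtain c L where IH: "syllable_form N (map (signed_letter f) ws) = (f (fst y), c) # L"
        "if snd y then c > 0 else c < 0"
      using Cons.IH \<open>ws = y # ws'\<close> by auto
    show ?thesis
    proof (cases "f (fst x) = f (fst y)")
      case True
      then have "fst x = fst y"
        using Cons.prems(2) assms(1) \<open>ws = y # ws'\<close> by (simp add: inj_on_eq_iff)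
      then have "snd x = snd y"
        using Cons.prems(3) \<open>ws = y # ws'\<close> freely_reduced_Cons_ConsD by blast
      then show ?thesis unfolding head IH(1) using IH(2) True by (cases "snd x") simp_all
    qed (unfold head IH(1), cases "snd x", simp_all)
  qed
qed simp

lemma free_of_rank_ge2_W_sub:
  assumes "N \<subseteq> V" "\<forall>v\<in>N. ord v = 0" "\<forall>v\<in>N. \<forall>w\<in>N. {v, w} \<notin> E"
    and "n1 \<in> N" "n2 \<in> N" "n1 \<noteq> n2"
  shows "free_of_rank_ge2 (graph_product V ord E) (W_sub V ord E N)"
proof -
  let ?G = "graph_product V ord E" and ?R = "gp_rel V ord E"
  define g where "g v = vertex_elem V ord E v 1" for v
  define B where "B = g ` N"
  define f where "f = the_inv_into N g"
  have "inj_on g N"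
  proof
    fix v w assume "v \<in> N" "w \<in> N" "g v = g w"
    then have "([(v, 1)], [(w, 1)]) \<in> ?R"
      using assms(1) gp_rel_Image_eq_iff[of "[(v, 1)]" V ord E "[(w, 1)]"]
      by (auto simp: g_def vertex_elem_def)
    then have "syllable_form N [(v, 1)] = syllable_form N [(w, 1)]"
      using gp_rel_syllable_form assms(2,3) by blast
    then show "v = w" using \<open>v \<in> N\<close> \<open>w \<in> N\<close> by (simp add: syllable_form_def)
  qed
  then have f: "inj_on f B" "f ` B \<subseteq> N" "\<forall>b\<in>B. g (f b) = b"
    unfolding B_def f_def
    by (auto intro: inj_on_the_inv_into the_inv_into_into simp: the_inv_into_f_f)
  have "B = {vertex_elem V ord E v 1 | v. v \<in> N}" by (auto simp: B_def g_def)
  then have gen: "generate ?G B = W_sub V ord E N"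
    using generate_vertex_generators[OF assms(1)] by simp
  have "word_prod ?G ws \<noteq> \<one>\<^bsub>?G\<^esub>" if ws: "ws \<noteq> []" "set (map fst ws) \<subseteq> B" "freely_reduced ws" for ws
  proof
    have "f b \<in> V" if "b \<in> B" for b using f(2) assms(1) that by blast
    then have letters: "\<forall>b\<in>set (map fst ws). f b \<in> V \<and> b = vertex_elem V ord E (f b) 1"
      using ws(2) f(3) by (auto simp: g_def)
    assume "word_prod ?G ws = \<one>\<^bsub>?G\<^esub>"
    then have "(map (signed_letter f) ws, []) \<in> ?R"
      using word_prod_vertex_generators[OF letters]
        gp_rel_Image_eq_iff[OF word_prod_vertex_generators(1)[OF letters]]
      by (simp add: one_graph_product)
    then have "syllable_form N (map (signed_letter f) ws) = syllable_form N []"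
      by (rule gp_rel_syllable_form[OF _ assms(2,3)])
    then show False using syllable_form_freely_reduced[OF f(1,2) ws] by (auto simp: syllable_form_def)
  qed
  moreover have "B \<subseteq> W_sub V ord E N"
  proof
    fix b assume "b \<in> B"
    then have "b \<in> generate ?G B" by (rule generate.incl)
    then show "b \<in> W_sub V ord E N" using gen by simp
  qed
  moreover have "infinite B \<or> card B \<ge> 2"
  proof (cases "finite B")
    case True
    have "g n1 \<noteq> g n2" using assms(4-6) \<open>inj_on g N\<close> by (simp add: inj_on_eq_iff)
    moreover have "card {g n1, g n2} \<le> card B" using True assms(4,5) by (intro card_mono) (auto simp: B_def)
    ultimately show ?thesis by simp
  qed simp
  ultimately have "free_basis ?G (W_sub V ord E N) B \<and> (infinite B \<or> card B \<ge> 2)"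
    unfolding free_basis_def using gen by simp
  then show ?thesis unfolding free_of_rank_ge2_def by blast
qed

subsection \<open>The combinatorics of tau-classes\<close>

lemma lk_commute: "x \<in> lk E v \<longleftrightarrow> v \<in> lk E x"
  unfolding lk_def by (simp add: insert_commute)

lemma st_commute: "x \<in> st E v \<longleftrightarrow> v \<in> st E x"
  unfolding st_def using lk_commute[of x E v] by auto

lemma not_in_lk_self: "simple_graph V E \<Longrightarrow> v \<notin> lk E v"
  unfolding simple_graph_def lk_def by force

text \<open>Clause (b) of tau_le only relates vertices of nonzero order; this is all that is used
  about the orders.\<close>

lemma tau_equiv_cases:
  assumes "simple_graph V E" "tau_equiv ord E v w" "v \<noteq> w"
  shows "st E v = st E w \<or> (ord v = 0 \<and> ord w = 0 \<and> {v, w} \<notin> E \<and> lk E v = lk E w)"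
proof -
  have le: "(ord v = 0 \<and> lk E v \<subseteq> st E w) \<or> (ord v \<noteq> 0 \<and> ord w \<noteq> 0 \<and> st E v \<subseteq> st E w)"
       "(ord w = 0 \<and> lk E w \<subseteq> st E v) \<or> (ord w \<noteq> 0 \<and> ord v \<noteq> 0 \<and> st E w \<subseteq> st E v)"
    using assms(2,3) unfolding tau_equiv_def tau_le_def by (auto simp: prime_gt_0_nat)
  show ?thesis
  proof (cases "ord v = 0")
    case True
    with le have "lk E v \<subseteq> st E w" "ord w = 0" "lk E w \<subseteq> st E v" by auto
    moreover have "w \<in> lk E v \<longleftrightarrow> {v, w} \<in> E" "v \<in> lk E w \<longleftrightarrow> {v, w} \<in> E"
      unfolding lk_def by (auto simp: insert_commute)
    ultimately show ?thesis
      using True assms(3) not_in_lk_self[OF assms(1)] unfolding st_def by (cases "{v, w} \<in> E") auto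
  qed (use le in auto)
qed

lemma tau_class_uniform_star_or_independent:
  assumes "simple_graph V E" "tau_class V ord E N"
  shows "(\<forall>x\<in>N. \<forall>y\<in>N. st E x = st E y)
    \<or> ((\<forall>v\<in>N. ord v = 0) \<and> (\<forall>v\<in>N. \<forall>w\<in>N. {v, w} \<notin> E) \<and> (\<exists>x\<in>N. \<exists>y\<in>N. x \<noteq> y))"
proof -
  from assms(2) obtain v0 where "v0 \<in> V" and N: "N = {w\<in>V. tau_equiv ord E v0 w}"
    unfolding tau_class_def by blast
  then have "v0 \<in> N" by (simp add: tau_equiv_def tau_le_def)
  have equiv_cases: "st E v0 = st E y \<or> (ord v0 = 0 \<and> ord y = 0 \<and> {v0, y} \<notin> E \<and> lk E v0 = lk E y)"
    if "y \<in> N" for y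
    using tau_equiv_cases[OF assms(1)] that N by (cases "y = v0") auto
  show ?thesis
  proof (cases "\<forall>y\<in>N. st E y = st E v0")
    case False
    then obtain x where x: "x \<in> N" "st E x \<noteq> st E v0" by blast
    with equiv_cases have twin: "ord v0 = 0" "{v0, x} \<notin> E" "lk E v0 = lk E x" by metis+
    \<comment> \<open>a vertex y \<noteq> v0 with the star of v0 would lie in lk v0 = lk x, putting x into st v0\<close>
    have "y = v0" if "y \<in> N" "st E v0 = st E y" for y
    proof (rule ccontr)
      assume "y \<noteq> v0"
      with that have "y \<in> lk E x" using twin by (auto simp: st_def)
      then have "x \<in> st E v0" using that lk_commute[of y E x] by (auto simp: st_def)
      then show False using twin x by (auto simp: st_def lk_def)
    qed
    then have twins: "ord y = 0 \<and> {v0, y} \<notin> E \<and> lk E y = lk E v0" if "y \<in> N" for y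
      using equiv_cases[OF that] twin not_in_lk_self[OF assms(1), of v0] that by (auto simp: lk_def)
    have "{y, z} \<notin> E" if "y \<in> N" "z \<in> N" for y z
    proof
      assume "{y, z} \<in> E"
      then have "z \<in> lk E v0" using twins[OF that(1)] by (auto simp: lk_def)
      then show False using twins[OF that(2)] by (simp add: lk_def)
    qed
    moreover have "x \<noteq> v0" using x(2) by blast
    ultimately show ?thesis using twins x(1) \<open>v0 \<in> N\<close> by blast
  qed auto
qed

lemma subset_L_set_if_uniform_star:
  assumes "N \<subseteq> V" "\<forall>x\<in>N. \<forall>y\<in>N. st E x = st E y" "N \<inter> L_set V E M \<noteq> {}"
  shows "N \<subseteq> L_set V E M"
proof
  fix x assume "x \<in> N"
  from assms(3) obtain n where n: "n \<in> N" "n \<in> L_set V E M" by blast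
  have "x \<notin> st E w" if "w \<in> M" for w
  proof
    assume "x \<in> st E w"
    then have "w \<in> st E x" by (simp only: st_commute)
    then have "w \<in> st E n" using assms(2) n(1) \<open>x \<in> N\<close> by metis
    then have "n \<in> st E w" by (simp only: st_commute)
    then show False using n(2) that by (auto simp: L_set_def)
  qed
  then show "x \<in> L_set V E M" using \<open>x \<in> N\<close> assms(1) by (auto simp: L_set_def)
qed

theorem lemma6p9:
  fixes V :: "'v set" and E :: "'v set set" and ord :: "'v \<Rightarrow> nat" and M N :: "'v set"
  assumes "simple_graph V E"
    and "\<forall>v\<in>V. ord v = 0 \<or> primary_order (ord v)"
    and "tau_class V ord E M" and "tau_class V ord E N"
    and "\<not> free_of_rank_ge2 (graph_product V ord E) (W_sub V ord E N)"
    and "N \<inter> L_set V E M \<noteq> {}"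
  shows "N \<subseteq> L_set V E M"
proof -
  have "N \<subseteq> V" using assms(4) by (auto simp: tau_class_def)
  have "\<forall>x\<in>N. \<forall>y\<in>N. st E x = st E y"
  proof (rule ccontr)
    assume "\<not> ?thesis"
    then obtain n1 n2 where "\<forall>v\<in>N. ord v = 0" "\<forall>v\<in>N. \<forall>w\<in>N. {v, w} \<notin> E"
      and "n1 \<in> N" "n2 \<in> N" "n1 \<noteq> n2"
      using tau_class_uniform_star_or_independent[OF assms(1,4)] by blast
    with \<open>N \<subseteq> V\<close> have "free_of_rank_ge2 (graph_product V ord E) (W_sub V ord E N)"
      by (rule free_of_rank_ge2_W_sub)
    with assms(5) show False by contradiction
  qed
  then show ?thesis by (rule subset_L_set_if_uniform_star[OF \<open>N \<subseteq> V\<close> _ assms(6)])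
qed

end
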